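(* In the setting of the following context, let $\varepsilon>0$ and take the regularizations $\Omega_{\Delta^{\mathcal Y(x)}}:=F^*_{\varepsilon,\Delta(x)}$ and $\Omega_{\mathcal C(x)}:=F^*_{\varepsilon,\mathcal C(x)}$. Then the alternating updates become $$\mu_i^{(t+1)}=\mathbb E_{\mathbf Z}\Big[\operatorname*{argmin}_{y_i\in\mathcal Y(x_i)}c(x_i,y_i,\xi_i)-\kappa\big(\varphi_{\bar w^{(t)}}(x_i)+\varepsilon\mathbf Z\big)^\top y_i\Big],$$ $$\bar w^{(t+1)}\in\operatorname*{argmin}_{w}\frac1N\sum_{i=1}^NF_{\varepsilon,\mathcal C(x_i)}\big(\varphi_w(x_i)\big)-\langle\varphi_w(x_i)|\mu_i^{(t+1)}\rangle,$$ where $\mathbf Z$ is standard multivariate normal, $\mu_i^{(t+1)}=Y(x_i)q_i^{(t+1)}$ (the expectation under $q_i^{(t+1)}$), and $\mu_i^{(t+1)}\in\mathcal C(x_i)$.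
   Context: Contexts $x_1,\dots,x_N$, noises $\xi_1,\dots,\xi_N$, cost $c(x,y,\xi)$, $\kappa>0$. For each $i$, $\mathcal Y(x_i)\subset\mathbb R^{d(x_i)}$ is finite with no element a strict convex combination of others, $Y(x_i)$ is the matrix with columns $y\in\mathcal Y(x_i)$, $\mathcal C(x_i)=\operatorname{conv}(\mathcal Y(x_i))$, $\gamma_i=(c(x_i,y,\xi_i))_{y\in\mathcal Y(x_i)}$, $\Delta^{\mathcal Y(x_i)}$ the probability simplex indexed by $\mathcal Y(x_i)$. With $\mathbf Z$ standard normal on $\mathbb R^{d(x)}$: $F_{\varepsilon,\mathcal C(x)}(\theta)=\mathbb E[\max_{y\in\mathcal Y(x)}(\theta+\varepsilon\mathbf Z)^\top y]$ and $F_{\varepsilon,\Delta(x)}(s)=\mathbb E[\max_{y\in\mathcal Y(x)}s(y)+\varepsilon\mathbf Z^\top y]$ for $s\in\mathbb R^{\mathcal Y(x)}$; ${}^*$ is Fenchel conjugation. $\varphi_w$ ($w\in\mathcal W$) is a statistical model with $\varphi_w(x_i)\in\mathbb R^{d(x_i)}$. With Fenchel–Young loss $\mathcal L_\Omega(s;q)=\Omega(q)+\Omega^*(s)-\langle s|q\rangle$, $S(s,q;x_i,\xi_i)=\langle\gamma_i|q\rangle+\kappa\mathcal L_{\Omega_{\Delta^{\mathcal Y(x_i)}}}(s;q)$ and $\mathcal S_N(s_\otimes,q_\otimes)=\frac1N\sum_iS(s_i,q_i;x_i,\xi_i)$. The alternating updates, started at $\bar w^{(0)}$, are $q_\otimes^{(t+1)}=\operatorname{argmin}_{q_\otimes\in\prod_i\Delta^{\mathcal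 Y(x_i)}}\mathcal S_N((Y(x_i)^\top\varphi_{\bar w^{(t)}}(x_i))_i,q_\otimes)$ and $\bar w^{(t+1)}\in\operatorname{argmin}_w\mathcal S_N((Y(x_i)^\top\varphi_w(x_i))_i,q_\otimes^{(t+1)})$, equivalently $\bar w^{(t+1)}\in\operatorname{argmin}_w\frac1N\sum_i\mathcal L_{\Omega_{\mathcal C(x_i)}}(\varphi_w(x_i);Y(x_i)q_i^{(t+1)})$. *)

theory Defs
  imports "HOL-Probability.Probability"
begin

text \<open>Vectors of R^d are modelled as functions nat \<Rightarrow> real vanishing outside
  {..<d}; elements of R^{Y} (vectors indexed by a finite set Y of such vectors)
  are modelled as functions (nat \<Rightarrow> real) \<Rightarrow> real vanishing outside Y.\<close>
type_synonym vec = "nat \<Rightarrow> real"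

definition Rd :: "nat \<Rightarrow> vec set" where
  "Rd d = {v. \<forall>j. d \<le> j \<longrightarrow> v j = 0}"

definition ipd :: "nat \<Rightarrow> vec \<Rightarrow> vec \<Rightarrow> real" where
  "ipd d u v = (\<Sum>j<d. u j * v j)"

definition RY :: "vec set \<Rightarrow> (vec \<Rightarrow> real) set" where
  "RY Y = {s. \<forall>y. y \<notin> Y \<longrightarrow> s y = 0}"

definition ipY :: "vec set \<Rightarrow> (vec \<Rightarrow> real) \<Rightarrow> (vec \<Rightarrow> real) \<Rightarrow> real" where
  "ipY Y s q = (\<Sum>y\<in>Y. s y * q y)"

definition simplexY :: "vec set \<Rightarrow> (vec \<Rightarrow> real) set" where
  "simplexY Y = {q \<in> RY Y. (\<forall>y. 0 \<le> q y) \<and> sum q Y = 1}"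

definition matY :: "vec set \<Rightarrow> (vec \<Rightarrow> real) \<Rightarrow> vec" where
  "matY Y q = (\<lambda>j. \<Sum>y\<in>Y. q y * y j)"

definition matYT :: "nat \<Rightarrow> vec set \<Rightarrow> vec \<Rightarrow> (vec \<Rightarrow> real)" where
  "matYT d Y \<theta> = (\<lambda>y. if y \<in> Y then ipd d \<theta> y else 0)"

definition convY :: "vec set \<Rightarrow> vec set" where
  "convY Y = matY Y ` simplexY Y"

definition gauss :: "nat \<Rightarrow> vec measure" where
  "gauss d = PiM {..<d} (\<lambda>_. density lborel std_normal_density)"

definition F_C :: "real \<Rightarrow> nat \<Rightarrow> vec set \<Rightarrow> vec \<Rightarrow> real" where
  "F_C \<epsilon> d Y \<theta> = (\<integral>Z. Max ((\<lambda>y. ipd d (\<lambda>j. \<theta> j + \<epsilon> * Z j) y) ` Y) \<partial>gauss d)"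

definition F_Delta :: "real \<Rightarrow> nat \<Rightarrow> vec set \<Rightarrow> (vec \<Rightarrow> real) \<Rightarrow> real" where
  "F_Delta \<epsilon> d Y s = (\<integral>Z. Max ((\<lambda>y. s y + \<epsilon> * ipd d Z y) ` Y) \<partial>gauss d)"

definition fconj :: "'v set \<Rightarrow> ('v \<Rightarrow> 'v \<Rightarrow> real) \<Rightarrow> ('v \<Rightarrow> ereal) \<Rightarrow> 'v \<Rightarrow> ereal" where
  "fconj A ip f s = (SUP q\<in>A. ereal (ip s q) - f q)"

definition FY_loss :: "'v set \<Rightarrow> ('v \<Rightarrow> 'v \<Rightarrow> real) \<Rightarrow> ('v \<Rightarrow> ereal) \<Rightarrow> 'v \<Rightarrow> 'v \<Rightarrow> ereal" where
  "FY_loss A ip \<Omega> s q = \<Omega> q + fconj A ip \<Omega> s - ereal (ip s q)"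

definition Omega_Delta :: "real \<Rightarrow> nat \<Rightarrow> vec set \<Rightarrow> (vec \<Rightarrow> real) \<Rightarrow> ereal" where
  "Omega_Delta \<epsilon> d Y = fconj (RY Y) (ipY Y) (\<lambda>s. ereal (F_Delta \<epsilon> d Y s))"

definition Omega_C :: "real \<Rightarrow> nat \<Rightarrow> vec set \<Rightarrow> vec \<Rightarrow> ereal" where
  "Omega_C \<epsilon> d Y = fconj (Rd d) (ipd d) (\<lambda>\<theta>. ereal (F_C \<epsilon> d Y \<theta>))"

definition S_loss :: "real \<Rightarrow> real \<Rightarrow> ('x \<Rightarrow> vec \<Rightarrow> 'n \<Rightarrow> real) \<Rightarrow> ('x \<Rightarrow> nat) \<Rightarrow> ('x \<Rightarrow> vec set)
    \<Rightarrow> (vec \<Rightarrow> real) \<Rightarrow> (vec \<Rightarrow> real) \<Rightarrow> 'x \<Rightarrow> 'n \<Rightarrow> ereal" where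
  "S_loss \<epsilon> \<kappa> c d Ycal s q x \<xi> =
     ereal (ipY (Ycal x) (\<lambda>y. c x y \<xi>) q)
     + ereal \<kappa> * FY_loss (RY (Ycal x)) (ipY (Ycal x)) (Omega_Delta \<epsilon> (d x) (Ycal x)) s q"

definition S_N :: "real \<Rightarrow> real \<Rightarrow> ('x \<Rightarrow> vec \<Rightarrow> 'n \<Rightarrow> real) \<Rightarrow> ('x \<Rightarrow> nat) \<Rightarrow> ('x \<Rightarrow> vec set)
    \<Rightarrow> nat \<Rightarrow> (nat \<Rightarrow> 'x) \<Rightarrow> (nat \<Rightarrow> 'n)
    \<Rightarrow> (nat \<Rightarrow> vec \<Rightarrow> real) \<Rightarrow> (nat \<Rightarrow> vec \<Rightarrow> real) \<Rightarrow> ereal" where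
  "S_N \<epsilon> \<kappa> c d Ycal N x \<xi> s q =
     ereal (1 / real N) * (\<Sum>i\<in>{1..N}. S_loss \<epsilon> \<kappa> c d Ycal (s i) (q i) (x i) (\<xi> i))"

definition argmins :: "('a \<Rightarrow> 'b::linorder) \<Rightarrow> 'a set \<Rightarrow> 'a set" where
  "argmins f A = {a \<in> A. \<forall>b\<in>A. f a \<le> f b}"

end

theory Submission
  imports Defs
begin

text \<open>For one sample, the inference objective is, up to a constant, \<open>\<kappa>\<close> times the
  Fenchel--Young gap of Omega_Delta at the cost-adjusted score \<open>s = Y\<^sup>T \<phi> - \<gamma> / \<kappa>\<close>. Its
  minimizers over the simplex are therefore the subgradients of F_Delta at \<open>s\<close> in the simplex.
  The law \<open>p\<^sub>s\<close> of the perturbed maximizer is such a subgradient, and the only one: Gaussian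
  perturbations make ties null events, so raising \<open>s y\<close> by \<open>t\<close> raises F_Delta by
  \<open>t p\<^sub>s(y) + o(t)\<close>. Hence the inference step has the unique solution \<open>p\<^sub>s\<close>, and \<open>Y p\<^sub>s\<close> is the
  expected perturbed argmin. Both regularizations are biconjugates (F_Delta and \<open>F_C = F_Delta \<circ> Y\<^sup>T\<close>
  have subgradients everywhere), so in the learning step every loss equals
  \<open>F_C(\<phi>\<^sub>w(x\<^sub>i)) - \<langle>\<phi>\<^sub>w(x\<^sub>i), \<mu>\<^sub>i\<rangle>\<close> plus a constant that does not depend on \<open>w\<close> and is finite at
  the solution of the inference step.\<close>

subsection \<open>The standard Gaussian measure\<close>

abbreviation std_normal :: "real measure" where
  "std_normal \<equiv> density lborel std_normal_density"

lemma prob_space_std_normal: "prob_space std_normal"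
  using prob_space_normal_density[of 1 0] by simp

lemma product_prob_space_std_normal: "product_prob_space (\<lambda>_. std_normal)"
  unfolding product_prob_space_def product_prob_space_axioms_def product_sigma_finite_def
  using prob_space_std_normal prob_space_imp_sigma_finite by blast

lemma prob_space_gauss: "prob_space (gauss d)"
  unfolding gauss_def by (rule prob_space_PiM) (rule prob_space_std_normal)

lemma gauss_component_measurable [measurable]:
  "k < d \<Longrightarrow> (\<lambda>Z. Z k) \<in> borel_measurable (gauss d)"
  unfolding gauss_def
  by (rule measurable_compose[OF measurable_component_singleton]) (auto simp: measurable_density_eq1)

lemma ipd_measurable [measurable]: "(\<lambda>Z. ipd d Z y) \<in> borel_measurable (gauss d)"
  unfolding ipd_def by measurable

lemma integrable_gauss_component:
  assumes "k < d"
  shows "integrable (gauss d) (\<lambda>Z. Z k)"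
proof -
  have "integrable lborel (\<lambda>x. std_normal_density x * x ^ 1)"
    by (rule integrable_std_normal_moment)
  then have "integrable std_normal (\<lambda>x. x)"
    by (subst integrable_density) (auto simp: normal_density_nonneg)
  moreover have "distr (gauss d) std_normal (\<lambda>Z. Z k) = std_normal"
    unfolding gauss_def
    by (rule product_prob_space.PiM_component[OF product_prob_space_std_normal]) (use assms in auto)
  ultimately have "integrable (distr (gauss d) std_normal (\<lambda>Z. Z k)) (\<lambda>x. x)"
    by simp
  then show ?thesis
    by (subst (asm) integrable_distr_eq)
       (use assms gauss_component_measurable[of k d] in \<open>auto simp: gauss_def measurable_density_eq1\<close>)
qed

lemma integrable_gauss_ipd: "integrable (gauss d) (\<lambda>Z. ipd d Z y)"
  unfolding ipd_def by (intro Bochner_Integration.integrable_sum integrable_mult_left integrable_gauss_component) simp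

lemma std_normal_singleton: "emeasure std_normal {p} = 0"
proof -
  have "{p} \<in> null_sets lborel" by (rule finite_imp_null_set_lborel) simp
  then have "(\<integral>\<^sup>+ x. ennreal (std_normal_density x) * indicator {p} x \<partial>lborel) = 0"
    by (rule nn_integral_null_set)
  then show ?thesis by (subst emeasure_density) auto
qed

text \<open>Fubini in the coordinate \<open>j\<close>: for fixed other coordinates the hyperplane is a single point.\<close>

lemma gauss_hyperplane_null:
  assumes j: "j < d" and vj: "v j \<noteq> 0"
  shows "{Z \<in> space (gauss d). ipd d Z v = c} \<in> null_sets (gauss d)"
proof -
  interpret product_sigma_finite "\<lambda>_. std_normal"
    using product_prob_space_std_normal unfolding product_prob_space_def by blast
  define I where "I = {..<d} - {j}"
  have dI: "{..<d} = insert j I" "finite I" "j \<notin> I" using j by (auto simp: I_def)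
  define S where "S = {Z \<in> space (gauss d). ipd d Z v = c}"
  have S: "S \<in> sets (gauss d)" unfolding S_def by measurable
  have "emeasure (gauss d) S = (\<integral>\<^sup>+ Z. indicator S Z \<partial>gauss d)"
    using S by simp
  also have "\<dots> = (\<integral>\<^sup>+ x. (\<integral>\<^sup>+ y. indicator S (x(j := y)) \<partial>std_normal) \<partial>PiM I (\<lambda>_. std_normal))"
    unfolding gauss_def dI(1)
    by (rule product_nn_integral_insert[OF dI(2,3)]) (use S in \<open>simp add: gauss_def dI(1)\<close>)
  also have "\<dots> = (\<integral>\<^sup>+ x. 0 \<partial>PiM I (\<lambda>_. std_normal))"
  proof (rule nn_integral_cong)
    fix x assume x: "x \<in> space (PiM I (\<lambda>_. std_normal))"
    define p where "p = (c - (\<Sum>k\<in>I. x k * v k)) / v j"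
    have "indicator S (x(j := y)) = (indicator {p} y :: ennreal)" for y
    proof -
      have "x(j := y) \<in> space (gauss d)"
        using x unfolding gauss_def dI(1) by (auto simp: space_PiM PiE_iff extensional_def)
      moreover have "ipd d (x(j := y)) v = (\<Sum>k\<in>I. x k * v k) + y * v j"
        unfolding ipd_def dI(1) using dI(2,3)
        by (simp add: sum.insert_remove) (intro sum.cong refl, auto)
      ultimately have "x(j := y) \<in> S \<longleftrightarrow> y = p"
        using vj unfolding S_def p_def by (auto simp: field_simps)
      then show ?thesis by (auto simp: indicator_def)
    qed
    then show "(\<integral>\<^sup>+ y. indicator S (x(j := y)) \<partial>std_normal) = 0"
      using std_normal_singleton[of p] by (simp add: sets_density)
  qed
  finally show ?thesis using S unfolding S_def by (auto intro: null_setsI)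
qed

lemma arg_min_on_measurable:
  fixes f :: "'b \<Rightarrow> 'a \<Rightarrow> real"
  assumes Y: "finite Y" "Y \<noteq> {}" and f: "\<And>y. y \<in> Y \<Longrightarrow> f y \<in> borel_measurable M"
  shows "(\<lambda>Z. arg_min_on (\<lambda>y. f y Z) Y) \<in> measurable M (count_space Y)"
proof (subst measurable_count_space_eq2[OF Y(1)], intro conjI ballI)
  show "(\<lambda>Z. arg_min_on (\<lambda>y. f y Z) Y) \<in> space M \<rightarrow> Y"
    using arg_min_if_finite(1)[OF Y] by auto
  define B where "B Z = {x \<in> Y. \<forall>y\<in>Y. f x Z \<le> f y Z}" for Z
  have arg_min_eq: "arg_min_on (\<lambda>y. f y Z) Y = (SOME x. x \<in> B Z)" for Z
    unfolding arg_min_on_def arg_min_def is_arg_min_def B_def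
    by (rule arg_cong[where f = Eps]) (auto simp: not_less)
  fix a assume "a \<in> Y"
  have "(\<lambda>Z. arg_min_on (\<lambda>y. f y Z) Y) -` {a} \<inter> space M =
      (\<Union>C\<in>{C \<in> Pow Y. (SOME x. x \<in> C) = a}. {Z \<in> space M. B Z = C})"
    by (auto simp: arg_min_eq B_def)
  also have "\<dots> \<in> sets M"
  proof (intro sets.finite_UN ballI)
    fix C assume "C \<in> {C \<in> Pow Y. (SOME x. x \<in> C) = a}"
    then have "{Z \<in> space M. B Z = C} = {Z \<in> space M. \<forall>x\<in>Y. x \<in> C \<longleftrightarrow> (\<forall>y\<in>Y. f x Z \<le> f y Z)}"
      by (auto simp: B_def)
    also have "\<dots> \<in> sets M"
      using Y(1) f by measurable
    finally show "{Z \<in> space M. B Z = C} \<in> sets M" .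
  qed (use Y in auto)
  finally show "(\<lambda>Z. arg_min_on (\<lambda>y. f y Z) Y) -` {a} \<inter> space M \<in> sets M" .
qed

lemma arg_min_on_affine:
  fixes f g :: "'a \<Rightarrow> real"
  assumes "c > 0" and "\<And>y. y \<in> Y \<Longrightarrow> f y = c * g y + b"
  shows "arg_min_on f Y = arg_min_on g Y"
  unfolding arg_min_on_def arg_min_def is_arg_min_def
  by (rule arg_cong[where f = Eps]) (use assms in auto)

lemma argmins_cong: "(\<And>w. w \<in> W \<Longrightarrow> f w = g w) \<Longrightarrow> argmins f W = argmins g W"
  unfolding argmins_def by auto

lemma argmins_unique_min:
  assumes "a \<in> A" and "\<And>b. b \<in> A \<Longrightarrow> b \<noteq> a \<Longrightarrow> f a < f b"
  shows "argmins f A = {a}"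
  using assms unfolding argmins_def by (auto simp: order.strict_iff_not)

lemma argmins_sum_PiE:
  fixes f :: "'i \<Rightarrow> 'a \<Rightarrow> ereal"
  assumes I: "finite I" and c: "c > 0"
    and min: "\<And>i. i \<in> I \<Longrightarrow> argmins (f i) (A i) = {a i}"
    and fin: "\<And>i. i \<in> I \<Longrightarrow> \<bar>f i (a i)\<bar> \<noteq> \<infinity>"
  shows "argmins (\<lambda>q. ereal c * (\<Sum>i\<in>I. f i (q i))) (PiE I A) = {restrict a I}"
proof (rule argmins_unique_min)
  have aA: "a i \<in> A i" and le: "\<And>b. b \<in> A i \<Longrightarrow> f i (a i) \<le> f i b" if "i \<in> I" for i
    using min[OF that] unfolding argmins_def by blast+
  have lt: "f i (a i) < f i b" if i: "i \<in> I" and b: "b \<in> A i" "b \<noteq> a i" for i b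
  proof -
    have "b \<notin> argmins (f i) (A i)" using min[OF i] b(2) by blast
    then obtain b' where "b' \<in> A i" "f i b' < f i b"
      using b(1) unfolding argmins_def by (auto simp: not_le)
    then show ?thesis using le[OF i] by (meson order_le_less_trans)
  qed
  show "restrict a I \<in> PiE I A" using aA by simp
  fix q assume q: "q \<in> PiE I A" "q \<noteq> restrict a I"
  obtain j where j: "j \<in> I" "q j \<noteq> a j"
    using q by (metis PiE_restrict restrict_ext)
  define S where "S = (\<Sum>i\<in>I - {j}. f i (a i))"
  have S: "\<bar>S\<bar> \<noteq> \<infinity>" unfolding S_def using I fin by (simp add: sum_Inf)
  have "(\<Sum>i\<in>I. f i (restrict a I i)) = f j (a j) + S"
    using I j(1) by (simp add: S_def sum.remove)
  also have "\<dots> < f j (q j) + S"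
    using ereal_less_add[OF S lt[OF j(1) _ j(2)]] q(1) j(1) by (simp add: add.commute PiE_iff)
  also have "\<dots> \<le> f j (q j) + (\<Sum>i\<in>I - {j}. f i (q i))"
    unfolding S_def using q(1) le by (intro add_left_mono sum_mono) (auto simp: PiE_iff)
  also have "\<dots> = (\<Sum>i\<in>I. f i (q i))"
    using I j(1) by (simp add: sum.remove)
  finally show "ereal c * (\<Sum>i\<in>I. f i (restrict a I i)) < ereal c * (\<Sum>i\<in>I. f i (q i))"
    using c by (intro ereal_mult_strict_left_mono) auto
qed

lemma argmins_ereal_sum_affine:
  fixes f :: "'i \<Rightarrow> 'w \<Rightarrow> ereal" and g :: "'i \<Rightarrow> 'w \<Rightarrow> real"
  assumes c: "c > 0" and k: "k > 0"
    and f: "\<And>i w. i \<in> I \<Longrightarrow> w \<in> W \<Longrightarrow> f i w = ereal (a i + k * g i w)"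
  shows "argmins (\<lambda>w. ereal c * (\<Sum>i\<in>I. f i w)) W = argmins (\<lambda>w. c * (\<Sum>i\<in>I. g i w)) W"
proof -
  have "argmins (\<lambda>w. ereal c * (\<Sum>i\<in>I. f i w)) W
      = argmins (\<lambda>w. ereal (c * sum a I + k * (c * (\<Sum>i\<in>I. g i w)))) W"
    by (rule argmins_cong) (simp add: f sum.distrib sum_distrib_left algebra_simps)
  also have "\<dots> = argmins (\<lambda>w. c * (\<Sum>i\<in>I. g i w)) W"
    unfolding argmins_def using k by simp
  finally show ?thesis .
qed

subsection \<open>Fenchel conjugates\<close>

lemma fconj_ge:
  assumes "z \<in> A"
  shows "ereal (ip q z - f z) \<le> fconj A ip (\<lambda>z. ereal (f z)) q"
  unfolding fconj_def using assms by (intro SUP_upper2[of z]) auto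

lemma fconj_eq_at_subgradient:
  assumes x: "x \<in> A" and sub: "\<And>z. z \<in> A \<Longrightarrow> f z \<ge> f x + ip g z - ip g x"
  shows "fconj A ip (\<lambda>z. ereal (f z)) g = ereal (ip g x - f x)"
proof (rule antisym)
  show "fconj A ip (\<lambda>z. ereal (f z)) g \<le> ereal (ip g x - f x)"
    unfolding fconj_def using sub by (intro SUP_least) fastforce
  show "ereal (ip g x - f x) \<le> fconj A ip (\<lambda>z. ereal (f z)) g"
    by (rule fconj_ge[OF x])
qed

lemma fconj_fconj_eq:
  assumes x: "x \<in> A" and g: "g \<in> A" and sub: "\<And>z. z \<in> A \<Longrightarrow> f z \<ge> f x + ip g z - ip g x"
    and ip_commute: "\<And>a b. ip a b = ip b a"
  shows "fconj A ip (fconj A ip (\<lambda>z. ereal (f z))) x = ereal (f x)"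
proof -
  let ?f = "fconj A ip (\<lambda>z. ereal (f z))"
  show ?thesis unfolding fconj_def[of A ip ?f]
  proof (rule antisym)
    show "(SUP q\<in>A. ereal (ip x q) - ?f q) \<le> ereal (f x)"
    proof (rule SUP_least)
      fix q assume "q \<in> A"
      have "ereal (ip q x - f x) \<le> ?f q" by (rule fconj_ge[OF x])
      then show "ereal (ip x q) - ?f q \<le> ereal (f x)"
        using ip_commute[of x q] by (cases "?f q") auto
    qed
    have "ereal (ip x g) - ?f g = ereal (f x)"
      using fconj_eq_at_subgradient[where f = f and ip = ip, OF x sub] ip_commute[of x g] by simp
    then show "ereal (f x) \<le> (SUP q\<in>A. ereal (ip x q) - ?f q)"
      using g by (intro SUP_upper2[of g]) auto
  qed
qed

lemma ipd_commute: "ipd d a b = ipd d b a"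
  unfolding ipd_def by (simp add: mult.commute)

lemma ipY_commute: "ipY Y a b = ipY Y b a"
  unfolding ipY_def by (simp add: mult.commute)

lemma ipd_add_scaled: "ipd d (\<lambda>k. a k + e * Z k) y = ipd d a y + e * ipd d Z y"
  unfolding ipd_def by (simp add: sum.distrib sum_distrib_left algebra_simps)

lemma matYT_in_RY: "matYT d Y \<theta> \<in> RY Y"
  unfolding matYT_def RY_def by auto

lemma matY_in_Rd: "Y \<subseteq> Rd d \<Longrightarrow> matY Y q \<in> Rd d"
  unfolding matY_def Rd_def by (auto intro!: sum.neutral)

lemma ipY_matYT: "ipY Y (matYT d Y \<theta>) q = ipd d \<theta> (matY Y q)"
proof -
  have "ipY Y (matYT d Y \<theta>) q = (\<Sum>y\<in>Y. \<Sum>j<d. \<theta> j * y j * q y)"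
    unfolding ipY_def matYT_def ipd_def by (simp add: sum_distrib_right)
  also have "\<dots> = ipd d \<theta> (matY Y q)"
    unfolding ipd_def matY_def by (subst sum.swap) (simp add: sum_distrib_left algebra_simps)
  finally show ?thesis .
qed

lemma F_Delta_matYT: "F_Delta \<epsilon> d Y (matYT d Y \<theta>) = F_C \<epsilon> d Y \<theta>"
  unfolding F_Delta_def F_C_def
  by (intro Bochner_Integration.integral_cong refl arg_cong[where f = Max] image_cong)
     (simp_all add: matYT_def ipd_add_scaled)

subsection \<open>Perturbed maximizers\<close>

text \<open>Ties between maximizers have probability zero (see gauss_hyperplane_null), so it does
  not matter which maximizer arg_min_on picks.\<close>

definition perturbed_argmax :: "real \<Rightarrow> nat \<Rightarrow> vec set \<Rightarrow> (vec \<Rightarrow> real) \<Rightarrow> vec \<Rightarrow> vec" where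
  "perturbed_argmax \<epsilon> d Y s Z = arg_min_on (\<lambda>y. - (s y + \<epsilon> * ipd d Z y)) Y"

definition argmax_prob :: "real \<Rightarrow> nat \<Rightarrow> vec set \<Rightarrow> (vec \<Rightarrow> real) \<Rightarrow> vec \<Rightarrow> real" where
  "argmax_prob \<epsilon> d Y s y =
     (if y \<in> Y then measure (gauss d) {Z \<in> space (gauss d). perturbed_argmax \<epsilon> d Y s Z = y} else 0)"

locale perturbed_max =
  fixes d :: nat and Y :: "vec set" and \<epsilon> :: real
  assumes finite_Y: "finite Y" and Y_nonempty: "Y \<noteq> {}" and Y_subset_Rd: "Y \<subseteq> Rd d"
    and eps_pos: "\<epsilon> > 0"
begin

abbreviation G :: "vec measure" where
  "G \<equiv> gauss d"

sublocale prob_space G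
  by (rule prob_space_gauss)

lemma perturbed_argmax_in: "perturbed_argmax \<epsilon> d Y s Z \<in> Y"
  unfolding perturbed_argmax_def by (rule arg_min_if_finite(1)[OF finite_Y Y_nonempty])

lemma perturbed_argmax_maximal:
  assumes "y \<in> Y"
  shows "s y + \<epsilon> * ipd d Z y \<le> s (perturbed_argmax \<epsilon> d Y s Z) + \<epsilon> * ipd d Z (perturbed_argmax \<epsilon> d Y s Z)"
  using arg_min_least[OF finite_Y Y_nonempty assms, of "\<lambda>y. - (s y + \<epsilon> * ipd d Z y)"]
  unfolding perturbed_argmax_def by simp

lemma Max_perturbed_eq:
  "Max ((\<lambda>y. s y + \<epsilon> * ipd d Z y) ` Y)
     = s (perturbed_argmax \<epsilon> d Y s Z) + \<epsilon> * ipd d Z (perturbed_argmax \<epsilon> d Y s Z)"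
  using finite_Y perturbed_argmax_in perturbed_argmax_maximal by (intro Max_eqI) auto

lemma perturbed_argmax_measurable: "perturbed_argmax \<epsilon> d Y s \<in> measurable G (count_space Y)"
  unfolding perturbed_argmax_def[abs_def]
  by (rule arg_min_on_measurable[OF finite_Y Y_nonempty]) measurable

lemma sets_perturbed_argmax_eq: "{Z \<in> space G. perturbed_argmax \<epsilon> d Y s Z = y} \<in> sets G"
proof (cases "y \<in> Y")
  case True
  then show ?thesis
    using perturbed_argmax_measurable unfolding measurable_count_space_eq2[OF finite_Y]
    by (auto simp: vimage_def Int_def conj_commute)
next
  case False
  then show ?thesis using perturbed_argmax_in by (metis (mono_tags, lifting) empty_Collect_eq sets.empty_sets)
qed

lemma integral_perturbed_argmax_split:
  fixes h :: "vec \<Rightarrow> vec \<Rightarrow> real" and s :: "vec \<Rightarrow> real"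
  assumes h: "\<And>y. y \<in> Y \<Longrightarrow> integrable G (h y)"
  defines "A y \<equiv> {Z \<in> space G. perturbed_argmax \<epsilon> d Y s Z = y}"
  shows "integrable G (\<lambda>Z. h (perturbed_argmax \<epsilon> d Y s Z) Z)"
    and "(\<integral>Z. h (perturbed_argmax \<epsilon> d Y s Z) Z \<partial>G) = (\<Sum>y\<in>Y. \<integral>Z. h y Z * indicator (A y) Z \<partial>G)"
proof -
  have split: "h (perturbed_argmax \<epsilon> d Y s Z) Z = (\<Sum>y\<in>Y. h y Z * indicator (A y) Z)"
    if "Z \<in> space G" for Z
    using that finite_Y perturbed_argmax_in by (simp add: A_def indicator_def if_distrib sum.delta')
  have "integrable G (\<lambda>Z. \<Sum>y\<in>Y. h y Z * indicator (A y) Z)"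
    unfolding A_def
    by (intro Bochner_Integration.integrable_sum integrable_real_mult_indicator sets_perturbed_argmax_eq h)
  moreover have "integrable G (\<lambda>Z. h (perturbed_argmax \<epsilon> d Y s Z) Z)
      \<longleftrightarrow> integrable G (\<lambda>Z. \<Sum>y\<in>Y. h y Z * indicator (A y) Z)"
    by (rule Bochner_Integration.integrable_cong) (simp_all add: split)
  ultimately show "integrable G (\<lambda>Z. h (perturbed_argmax \<epsilon> d Y s Z) Z)"
    by simp
  have "(\<integral>Z. h (perturbed_argmax \<epsilon> d Y s Z) Z \<partial>G) = (\<integral>Z. (\<Sum>y\<in>Y. h y Z * indicator (A y) Z) \<partial>G)"
    by (intro Bochner_Integration.integral_cong) (simp_all add: split)
  also have "\<dots> = (\<Sum>y\<in>Y. \<integral>Z. h y Z * indicator (A y) Z \<partial>G)"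
    unfolding A_def
    by (intro Bochner_Integration.integral_sum integrable_real_mult_indicator sets_perturbed_argmax_eq h)
  finally show "(\<integral>Z. h (perturbed_argmax \<epsilon> d Y s Z) Z \<partial>G) = (\<Sum>y\<in>Y. \<integral>Z. h y Z * indicator (A y) Z \<partial>G)" .
qed

lemma integral_perturbed_argmax:
  "integrable G (\<lambda>Z. h (perturbed_argmax \<epsilon> d Y s Z))"
  "(\<integral>Z. h (perturbed_argmax \<epsilon> d Y s Z) \<partial>G) = (\<Sum>y\<in>Y. h y * argmax_prob \<epsilon> d Y s y)"
  using integral_perturbed_argmax_split[of "\<lambda>y Z. h y" s]
  by (simp_all add: argmax_prob_def integral_indicator sets_perturbed_argmax_eq Int_absorb2 sets.sets_into_space)

lemma argmax_prob_simplex: "argmax_prob \<epsilon> d Y s \<in> simplexY Y"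
proof -
  have "sum (argmax_prob \<epsilon> d Y s) Y = 1"
    using integral_perturbed_argmax(2)[of "\<lambda>_. 1" s] by (simp add: prob_space)
  then show ?thesis
    unfolding simplexY_def RY_def by (auto simp: argmax_prob_def)
qed

lemma integrable_perturbed_max: "integrable G (\<lambda>Z. Max ((\<lambda>y. s y + \<epsilon> * ipd d Z y) ` Y))"
  using integral_perturbed_argmax_split(1)[of "\<lambda>y Z. s y + \<epsilon> * ipd d Z y" s]
  by (simp add: Max_perturbed_eq integrable_gauss_ipd)

lemma F_Delta_diff:
  "F_Delta \<epsilon> d Y z - F_Delta \<epsilon> d Y s
     = (\<integral>Z. Max ((\<lambda>y. z y + \<epsilon> * ipd d Z y) ` Y) - Max ((\<lambda>y. s y + \<epsilon> * ipd d Z y) ` Y) \<partial>G)"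
  unfolding F_Delta_def by (rule Bochner_Integration.integral_diff[symmetric]) (rule integrable_perturbed_max)+

lemma F_Delta_subgradient:
  "F_Delta \<epsilon> d Y z \<ge> F_Delta \<epsilon> d Y s + ipY Y (argmax_prob \<epsilon> d Y s) z - ipY Y (argmax_prob \<epsilon> d Y s) s"
proof -
  have "ipY Y (argmax_prob \<epsilon> d Y s) z - ipY Y (argmax_prob \<epsilon> d Y s) s
      = (\<integral>Z. z (perturbed_argmax \<epsilon> d Y s Z) - s (perturbed_argmax \<epsilon> d Y s Z) \<partial>G)"
    using integral_perturbed_argmax(2)[of "\<lambda>y. z y - s y" s]
    unfolding ipY_def by (simp add: algebra_simps sum_subtractf)
  also have "\<dots> \<le> F_Delta \<epsilon> d Y z - F_Delta \<epsilon> d Y s"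
    unfolding F_Delta_diff
  proof (rule integral_mono)
    fix Z
    have "z (perturbed_argmax \<epsilon> d Y s Z) + \<epsilon> * ipd d Z (perturbed_argmax \<epsilon> d Y s Z)
        \<le> Max ((\<lambda>y. z y + \<epsilon> * ipd d Z y) ` Y)"
      using finite_Y perturbed_argmax_in by (intro Max_ge) auto
    then show "z (perturbed_argmax \<epsilon> d Y s Z) - s (perturbed_argmax \<epsilon> d Y s Z)
        \<le> Max ((\<lambda>y. z y + \<epsilon> * ipd d Z y) ` Y) - Max ((\<lambda>y. s y + \<epsilon> * ipd d Z y) ` Y)"
      by (simp add: Max_perturbed_eq)
  qed (intro Bochner_Integration.integrable_diff integral_perturbed_argmax(1) integrable_perturbed_max)+
  finally show ?thesis by simp
qed

lemma perturbed_tie_null: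
  assumes "y \<in> Y" "y0 \<in> Y" "y \<noteq> y0"
  shows "{Z \<in> space G. s y + \<epsilon> * ipd d Z y = s y0 + \<epsilon> * ipd d Z y0} \<in> null_sets G"
proof -
  obtain j where yj: "y j \<noteq> y0 j" using \<open>y \<noteq> y0\<close> by (auto simp: fun_eq_iff)
  have j: "j < d"
  proof (rule ccontr)
    assume "\<not> j < d"
    then have "y j = 0" "y0 j = 0" using assms Y_subset_Rd by (auto simp: Rd_def)
    with yj show False by simp
  qed
  have "s y + \<epsilon> * ipd d Z y = s y0 + \<epsilon> * ipd d Z y0
      \<longleftrightarrow> ipd d Z (\<lambda>k. y k - y0 k) = (s y0 - s y) / \<epsilon>" for Z
  proof -
    have "ipd d Z (\<lambda>k. y k - y0 k) = ipd d Z y - ipd d Z y0"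
      unfolding ipd_def by (simp add: right_diff_distrib sum_subtractf)
    then have "\<epsilon> * ipd d Z (\<lambda>k. y k - y0 k) = \<epsilon> * ipd d Z y - \<epsilon> * ipd d Z y0"
      by (simp add: right_diff_distrib)
    moreover have "ipd d Z (\<lambda>k. y k - y0 k) = (s y0 - s y) / \<epsilon>
        \<longleftrightarrow> \<epsilon> * ipd d Z (\<lambda>k. y k - y0 k) = s y0 - s y"
      using eps_pos by (auto simp: eq_divide_eq mult.commute)
    ultimately show ?thesis by linarith
  qed
  then have "{Z \<in> space G. s y + \<epsilon> * ipd d Z y = s y0 + \<epsilon> * ipd d Z y0}
      = {Z \<in> space G. ipd d Z (\<lambda>k. y k - y0 k) = (s y0 - s y) / \<epsilon>}"
    by blast
  also have "\<dots> \<in> null_sets G"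
    using gauss_hyperplane_null[OF j, of "\<lambda>k. y k - y0 k"] yj by simp
  finally show ?thesis .
qed

definition near_argmax :: "(vec \<Rightarrow> real) \<Rightarrow> vec \<Rightarrow> real \<Rightarrow> vec set" where
  "near_argmax s y0 t = {Z \<in> space G. \<forall>y\<in>Y. s y + \<epsilon> * ipd d Z y \<le> s y0 + \<epsilon> * ipd d Z y0 + t}"

lemma sets_near_argmax: "near_argmax s y0 t \<in> sets G"
proof -
  have "Measurable.pred G (\<lambda>Z. \<forall>y\<in>Y. s y + \<epsilon> * ipd d Z y \<le> s y0 + \<epsilon> * ipd d Z y0 + t)"
  proof (rule pred_intros_finite(3)[OF finite_Y])
    fix y
    show "Measurable.pred G (\<lambda>Z. s y + \<epsilon> * ipd d Z y \<le> s y0 + \<epsilon> * ipd d Z y0 + t)"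
      unfolding pred_def by (intro borel_measurable_le) auto
  qed
  then show ?thesis unfolding near_argmax_def pred_def by simp
qed

lemma near_argmax_mono: "t \<le> t' \<Longrightarrow> near_argmax s y0 t \<subseteq> near_argmax s y0 t'"
  unfolding near_argmax_def by (auto intro: order_trans)

lemma measure_near_argmax_tendsto:
  "(\<lambda>n. measure G (near_argmax s y0 (1 / Suc n))) \<longlonglongrightarrow> measure G (near_argmax s y0 0)"
proof -
  have dec: "decseq (\<lambda>n. near_argmax s y0 (1 / Suc n))"
  proof (rule decseq_SucI)
    fix n :: nat
    have "1 / real (Suc (Suc n)) \<le> 1 / real (Suc n)"
      by (rule frac_le) auto
    then show "near_argmax s y0 (1 / Suc (Suc n)) \<subseteq> near_argmax s y0 (1 / Suc n)"
      by (rule near_argmax_mono)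
  qed
  have inter: "(\<Inter>n. near_argmax s y0 (1 / Suc n)) = near_argmax s y0 0"
  proof (intro equalityI subsetI)
    fix Z assume Z: "Z \<in> (\<Inter>n. near_argmax s y0 (1 / Suc n))"
    have "s y + \<epsilon> * ipd d Z y \<le> s y0 + \<epsilon> * ipd d Z y0" if "y \<in> Y" for y
    proof (rule field_le_epsilon)
      fix e :: real assume "e > 0"
      then obtain n where n: "1 / Suc n < e" by (rule nat_approx_posE)
      have "Z \<in> near_argmax s y0 (1 / Suc n)" using Z by (rule InterD) simp
      then have "s y + \<epsilon> * ipd d Z y \<le> s y0 + \<epsilon> * ipd d Z y0 + 1 / Suc n"
        using that unfolding near_argmax_def by simp
      then show "s y + \<epsilon> * ipd d Z y \<le> s y0 + \<epsilon> * ipd d Z y0 + e" using n by linarith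
    qed
    moreover have "Z \<in> space G"
      using Z by (auto simp: near_argmax_def)
    ultimately show "Z \<in> near_argmax s y0 0" by (simp add: near_argmax_def)
  next
    fix Z assume "Z \<in> near_argmax s y0 0"
    then have "Z \<in> near_argmax s y0 (1 / Suc n)" for n
      using near_argmax_mono[of 0 "1 / Suc n"] by auto
    then show "Z \<in> (\<Inter>n. near_argmax s y0 (1 / Suc n))" by blast
  qed
  have "(\<lambda>n. measure G (near_argmax s y0 (1 / Suc n))) \<longlonglongrightarrow> measure G (\<Inter>n. near_argmax s y0 (1 / Suc n))"
    by (rule finite_Lim_measure_decseq) (use sets_near_argmax dec in auto)
  then show ?thesis unfolding inter .
qed

lemma measure_exact_argmax_le:
  assumes y0: "y0 \<in> Y"
  shows "measure G (near_argmax s y0 0) \<le> argmax_prob \<epsilon> d Y s y0"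
proof -
  define N where
    "N = (\<Union>y\<in>Y - {y0}. {Z \<in> space G. s y + \<epsilon> * ipd d Z y = s y0 + \<epsilon> * ipd d Z y0})"
  have N: "N \<in> null_sets G"
    unfolding N_def using finite_Y y0 by (intro null_sets_UN' countable_finite perturbed_tie_null) auto
  have argmax: "perturbed_argmax \<epsilon> d Y s Z = y0" if Z: "Z \<in> near_argmax s y0 0" "Z \<notin> N" for Z
  proof (rule ccontr)
    let ?y = "perturbed_argmax \<epsilon> d Y s Z"
    assume "?y \<noteq> y0"
    have "?y \<in> Y" by (rule perturbed_argmax_in)
    then have "s ?y + \<epsilon> * ipd d Z ?y \<le> s y0 + \<epsilon> * ipd d Z y0"
      using Z(1) unfolding near_argmax_def by auto
    moreover have "s y0 + \<epsilon> * ipd d Z y0 \<le> s ?y + \<epsilon> * ipd d Z ?y"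
      by (rule perturbed_argmax_maximal[OF y0])
    ultimately have "Z \<in> N"
      using \<open>?y \<in> Y\<close> \<open>?y \<noteq> y0\<close> Z(1) unfolding N_def near_argmax_def by auto
    with Z(2) show False ..
  qed
  have "AE Z in G. Z \<in> near_argmax s y0 0 \<longrightarrow> Z \<in> {Z \<in> space G. perturbed_argmax \<epsilon> d Y s Z = y0}"
    by (intro AE_I'[OF N]) (use argmax in \<open>auto simp: near_argmax_def\<close>)
  then show ?thesis
    using finite_measure_mono_AE[OF _ sets_perturbed_argmax_eq] y0 by (simp add: argmax_prob_def)
qed

lemma perturbed_max_bump_le:
  assumes y0: "y0 \<in> Y" and t: "t \<ge> 0" and Z: "Z \<in> space G"
  shows "Max ((\<lambda>y. (s(y0 := s y0 + t)) y + \<epsilon> * ipd d Z y) ` Y)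
    \<le> Max ((\<lambda>y. s y + \<epsilon> * ipd d Z y) ` Y) + t * indicator (near_argmax s y0 t) Z"
proof -
  let ?m = "Max ((\<lambda>y. s y + \<epsilon> * ipd d Z y) ` Y)"
  have le_m: "s y + \<epsilon> * ipd d Z y \<le> ?m" if "y \<in> Y" for y
    using finite_Y that by (intro Max_ge) auto
  have bump: "s y0 + t + \<epsilon> * ipd d Z y0 \<le> ?m + t * indicator (near_argmax s y0 t) Z"
  proof (cases "Z \<in> near_argmax s y0 t")
    case True
    then show ?thesis using le_m[OF y0] by simp
  next
    case False
    then obtain y1 where "y1 \<in> Y" "s y0 + \<epsilon> * ipd d Z y0 + t < s y1 + \<epsilon> * ipd d Z y1"
      using Z unfolding near_argmax_def by (auto simp: not_le)
    then show ?thesis using le_m[of y1] False by simp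
  qed
  have "(s(y0 := s y0 + t)) y + \<epsilon> * ipd d Z y \<le> ?m + t * indicator (near_argmax s y0 t) Z"
    if "y \<in> Y" for y
  proof (cases "y = y0")
    case True
    then show ?thesis using bump by simp
  next
    case False
    moreover have "0 \<le> t * indicator (near_argmax s y0 t) Z" using t by simp
    ultimately show ?thesis using le_m[OF that] by simp
  qed
  then show ?thesis using finite_Y Y_nonempty by (subst Max_le_iff) auto
qed

text \<open>Raising the score of \<open>y0\<close> by \<open>t\<close> raises F_Delta by at most \<open>t\<close> times the probability
  that \<open>y0\<close> is a \<open>t\<close>-near maximizer; a subgradient therefore charges \<open>y0\<close> at most that probability.\<close>

lemma subgradient_le_near_argmax:
  assumes s: "s \<in> RY Y"
    and sub: "\<And>z. z \<in> RY Y \<Longrightarrow> F_Delta \<epsilon> d Y z \<ge> F_Delta \<epsilon> d Y s + ipY Y q z - ipY Y q s"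
    and y0: "y0 \<in> Y" and t: "t > 0"
  shows "q y0 \<le> measure G (near_argmax s y0 t)"
proof -
  define z where "z = s(y0 := s y0 + t)"
  have "z \<in> RY Y" using s y0 unfolding z_def RY_def by auto
  have "ipY Y q z - ipY Y q s = (\<Sum>y\<in>Y. if y = y0 then t * q y0 else 0)"
    unfolding ipY_def sum_subtractf[symmetric] by (intro sum.cong) (auto simp: z_def algebra_simps)
  then have "t * q y0 \<le> F_Delta \<epsilon> d Y z - F_Delta \<epsilon> d Y s"
    using sub[OF \<open>z \<in> RY Y\<close>] finite_Y y0 by simp
  also have "\<dots> \<le> (\<integral>Z. t * indicator (near_argmax s y0 t) Z \<partial>G)"
    unfolding F_Delta_diff
  proof (rule integral_mono)
    show "integrable G (\<lambda>Z. t * indicator (near_argmax s y0 t) Z)"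
      using sets_near_argmax by (intro integrable_mult_right integrable_real_indicator)
        (auto simp: emeasure_eq_measure)
    fix Z assume "Z \<in> space G"
    then show "Max ((\<lambda>y. z y + \<epsilon> * ipd d Z y) ` Y) - Max ((\<lambda>y. s y + \<epsilon> * ipd d Z y) ` Y)
        \<le> t * indicator (near_argmax s y0 t) Z"
      using perturbed_max_bump_le[OF y0 _ \<open>Z \<in> space G\<close>, of t s] t unfolding z_def by simp
  qed (intro Bochner_Integration.integrable_diff integrable_perturbed_max)
  also have "\<dots> = t * measure G (near_argmax s y0 t)"
    using sets_near_argmax by simp
  finally show ?thesis using t by simp
qed

lemma subgradient_eq_argmax_prob:
  assumes s: "s \<in> RY Y" and q: "q \<in> simplexY Y"
    and sub: "\<And>z. z \<in> RY Y \<Longrightarrow> F_Delta \<epsilon> d Y z \<ge> F_Delta \<epsilon> d Y s + ipY Y q z - ipY Y q s"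
  shows "q = argmax_prob \<epsilon> d Y s"
proof -
  let ?p = "argmax_prob \<epsilon> d Y s"
  have le: "q y \<le> ?p y" if "y \<in> Y" for y
  proof -
    have "q y \<le> measure G (near_argmax s y 0)"
      using subgradient_le_near_argmax[OF s sub that]
      by (intro LIMSEQ_le_const[OF measure_near_argmax_tendsto]) auto
    also have "\<dots> \<le> ?p y" by (rule measure_exact_argmax_le[OF that])
    finally show ?thesis .
  qed
  have p: "?p \<in> simplexY Y" by (rule argmax_prob_simplex)
  then have "(\<Sum>y\<in>Y. ?p y - q y) = 0"
    using q unfolding simplexY_def by (simp add: sum_subtractf)
  then have eq: "?p y - q y = 0" if "y \<in> Y" for y
    using le finite_Y that by (subst (asm) sum_nonneg_eq_0_iff) auto
  show ?thesis
  proof (rule ext)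
    fix y
    show "q y = ?p y"
      using eq[of y] p q by (cases "y \<in> Y") (auto simp: simplexY_def RY_def)
  qed
qed

subsection \<open>The regularizations as conjugates\<close>

lemma fconj_Omega_Delta:
  assumes "s \<in> RY Y"
  shows "fconj (RY Y) (ipY Y) (Omega_Delta \<epsilon> d Y) s = ereal (F_Delta \<epsilon> d Y s)"
proof -
  have "argmax_prob \<epsilon> d Y s \<in> RY Y"
    using argmax_prob_simplex by (simp add: simplexY_def)
  then show ?thesis
    unfolding Omega_Delta_def
    by (rule fconj_fconj_eq[where f = "F_Delta \<epsilon> d Y" and ip = "ipY Y" and g = "argmax_prob \<epsilon> d Y s",
          OF assms _ F_Delta_subgradient ipY_commute])
qed

lemma F_C_subgradient:
  fixes \<theta> :: vec
  defines "\<mu> \<equiv> matY Y (argmax_prob \<epsilon> d Y (matYT d Y \<theta>))"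
  shows "F_C \<epsilon> d Y z \<ge> F_C \<epsilon> d Y \<theta> + ipd d \<mu> z - ipd d \<mu> \<theta>"
  using F_Delta_subgradient[of "matYT d Y \<theta>" "matYT d Y z"]
  by (simp add: \<mu>_def F_Delta_matYT ipY_commute[of Y "argmax_prob _ _ _ _"] ipY_matYT ipd_commute)

lemma fconj_Omega_C:
  assumes "\<theta> \<in> Rd d"
  shows "fconj (Rd d) (ipd d) (Omega_C \<epsilon> d Y) \<theta> = ereal (F_C \<epsilon> d Y \<theta>)"
  unfolding Omega_C_def
  by (rule fconj_fconj_eq[where f = "F_C \<epsilon> d Y" and ip = "ipd d",
        OF assms matY_in_Rd[OF Y_subset_Rd] F_C_subgradient ipd_commute])

lemma Omega_Delta_ge:
  assumes "s \<in> RY Y"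
  shows "ereal (ipY Y q s - F_Delta \<epsilon> d Y s) \<le> Omega_Delta \<epsilon> d Y q"
  unfolding Omega_Delta_def by (rule fconj_ge[OF assms])

lemma Omega_Delta_argmax_prob:
  assumes "s \<in> RY Y"
  shows "Omega_Delta \<epsilon> d Y (argmax_prob \<epsilon> d Y s)
    = ereal (ipY Y (argmax_prob \<epsilon> d Y s) s - F_Delta \<epsilon> d Y s)"
  unfolding Omega_Delta_def
  by (rule fconj_eq_at_subgradient[where f = "F_Delta \<epsilon> d Y" and ip = "ipY Y" and g = "argmax_prob \<epsilon> d Y s",
        OF assms F_Delta_subgradient])

lemma Omega_Delta_gt:
  assumes s: "s \<in> RY Y" and q: "q \<in> simplexY Y" "q \<noteq> argmax_prob \<epsilon> d Y s"
  shows "ereal (ipY Y q s - F_Delta \<epsilon> d Y s) < Omega_Delta \<epsilon> d Y q"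
proof (rule ccontr)
  assume "\<not> ?thesis"
  then have eq: "Omega_Delta \<epsilon> d Y q = ereal (ipY Y q s - F_Delta \<epsilon> d Y s)"
    using Omega_Delta_ge[OF s, of q] by simp
  have "F_Delta \<epsilon> d Y z \<ge> F_Delta \<epsilon> d Y s + ipY Y q z - ipY Y q s" if "z \<in> RY Y" for z
    using Omega_Delta_ge[OF that, of q] unfolding eq by simp
  then have "q = argmax_prob \<epsilon> d Y s" by (rule subgradient_eq_argmax_prob[OF s q(1)])
  with q(2) show False ..
qed

lemma Omega_C_matY_le: "Omega_C \<epsilon> d Y (matY Y q) \<le> Omega_Delta \<epsilon> d Y q"
  unfolding Omega_C_def fconj_def
proof (rule SUP_least)
  fix \<theta> assume "\<theta> \<in> Rd d"
  have "ereal (ipY Y q (matYT d Y \<theta>) - F_Delta \<epsilon> d Y (matYT d Y \<theta>)) \<le> Omega_Delta \<epsilon> d Y q"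
    by (rule Omega_Delta_ge[OF matYT_in_RY])
  then show "ereal (ipd d (matY Y q) \<theta>) - ereal (F_C \<epsilon> d Y \<theta>) \<le> Omega_Delta \<epsilon> d Y q"
    by (simp add: ipY_commute[of Y q] ipY_matYT F_Delta_matYT ipd_commute[of d "matY Y q"])
qed

lemma Omega_C_ge: "ereal (- F_C \<epsilon> d Y (\<lambda>_. 0)) \<le> Omega_C \<epsilon> d Y \<mu>"
proof -
  have "(\<lambda>_. 0) \<in> Rd d" unfolding Rd_def by simp
  then show ?thesis
    unfolding Omega_C_def using fconj_ge[of "\<lambda>_. 0" "Rd d" "ipd d" \<mu>] by (simp add: ipd_def)
qed

lemma FY_loss_Omega_Delta_matYT:
  "FY_loss (RY Y) (ipY Y) (Omega_Delta \<epsilon> d Y) (matYT d Y \<theta>) q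
     = Omega_Delta \<epsilon> d Y q + ereal (F_C \<epsilon> d Y \<theta> - ipd d \<theta> (matY Y q))"
  unfolding FY_loss_def fconj_Omega_Delta[OF matYT_in_RY] F_Delta_matYT ipY_matYT
  by (cases "Omega_Delta \<epsilon> d Y q") simp_all

lemma FY_loss_Omega_C:
  assumes "\<theta> \<in> Rd d"
  shows "FY_loss (Rd d) (ipd d) (Omega_C \<epsilon> d Y) \<theta> \<mu>
     = Omega_C \<epsilon> d Y \<mu> + ereal (F_C \<epsilon> d Y \<theta> - ipd d \<theta> \<mu>)"
  unfolding FY_loss_def fconj_Omega_C[OF assms]
  by (cases "Omega_C \<epsilon> d Y \<mu>") simp_all

lemma matY_argmax_prob:
  "matY Y (argmax_prob \<epsilon> d Y s) = (\<lambda>j. \<integral>Z. perturbed_argmax \<epsilon> d Y s Z j \<partial>G)"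
proof
  fix j
  show "matY Y (argmax_prob \<epsilon> d Y s) j = (\<integral>Z. perturbed_argmax \<epsilon> d Y s Z j \<partial>G)"
    unfolding matY_def using integral_perturbed_argmax(2)[of "\<lambda>y. y j" s]
    by (simp add: mult.commute)
qed

end

subsection \<open>The regularized inference problem\<close>

text \<open>Dividing the cost by \<open>\<kappa>\<close> turns the minimization of
  \<open>\<gamma> y - \<kappa> (\<theta> + \<epsilon> Z)\<^sup>T y\<close> into the maximization of \<open>\<theta>\<^sup>T y - \<gamma> y / \<kappa> + \<epsilon> Z\<^sup>T y\<close>.\<close>

definition cost_adjusted_score :: "real \<Rightarrow> nat \<Rightarrow> vec set \<Rightarrow> (vec \<Rightarrow> real) \<Rightarrow> vec \<Rightarrow> vec \<Rightarrow> real" where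
  "cost_adjusted_score \<kappa> d Y \<gamma> \<theta> y = (if y \<in> Y then ipd d \<theta> y - \<gamma> y / \<kappa> else 0)"

lemma cost_adjusted_score_in_RY: "cost_adjusted_score \<kappa> d Y \<gamma> \<theta> \<in> RY Y"
  unfolding cost_adjusted_score_def RY_def by simp

lemma ipY_cost_adjusted_score:
  "ipY Y q (cost_adjusted_score \<kappa> d Y \<gamma> \<theta>) = ipd d \<theta> (matY Y q) - ipY Y \<gamma> q / \<kappa>"
proof -
  have "ipY Y q (cost_adjusted_score \<kappa> d Y \<gamma> \<theta>) = (\<Sum>y\<in>Y. matYT d Y \<theta> y * q y - \<gamma> y * q y / \<kappa>)"
    unfolding ipY_def by (intro sum.cong refl) (simp add: cost_adjusted_score_def matYT_def algebra_simps)
  also have "\<dots> = ipY Y (matYT d Y \<theta>) q - ipY Y \<gamma> q / \<kappa>"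
    unfolding ipY_def by (simp add: sum_subtractf sum_divide_distrib)
  finally show ?thesis by (simp add: ipY_matYT)
qed

context perturbed_max
begin

lemma arg_min_on_cost_eq_perturbed_argmax:
  assumes "\<kappa> > 0"
  shows "arg_min_on (\<lambda>y. \<gamma> y - \<kappa> * ipd d (\<lambda>k. \<theta> k + \<epsilon> * Z k) y) Y
    = perturbed_argmax \<epsilon> d Y (cost_adjusted_score \<kappa> d Y \<gamma> \<theta>) Z"
  unfolding perturbed_argmax_def
  by (rule arg_min_on_affine[where b = 0, OF assms])
     (use assms in \<open>simp add: cost_adjusted_score_def ipd_add_scaled field_simps\<close>)

lemma regularized_cost_eq:
  fixes \<gamma> :: "vec \<Rightarrow> real" and \<theta> :: vec
  assumes "\<kappa> > 0"
  defines "s \<equiv> cost_adjusted_score \<kappa> d Y \<gamma> \<theta>"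
  shows "ereal (ipY Y \<gamma> q) + ereal \<kappa> * FY_loss (RY Y) (ipY Y) (Omega_Delta \<epsilon> d Y) (matYT d Y \<theta>) q
    = ereal (\<kappa> * (F_C \<epsilon> d Y \<theta> - F_Delta \<epsilon> d Y s))
      + ereal \<kappa> * (Omega_Delta \<epsilon> d Y q - ereal (ipY Y q s - F_Delta \<epsilon> d Y s))"
  using assms(1) unfolding FY_loss_Omega_Delta_matYT s_def ipY_cost_adjusted_score
  by (cases "Omega_Delta \<epsilon> d Y q") (simp_all add: field_simps)

lemma regularized_cost_at_argmax_prob:
  fixes \<gamma> :: "vec \<Rightarrow> real" and \<theta> :: vec
  assumes "\<kappa> > 0"
  defines "s \<equiv> cost_adjusted_score \<kappa> d Y \<gamma> \<theta>"
  shows "ereal (ipY Y \<gamma> (argmax_prob \<epsilon> d Y s))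
      + ereal \<kappa> * FY_loss (RY Y) (ipY Y) (Omega_Delta \<epsilon> d Y) (matYT d Y \<theta>) (argmax_prob \<epsilon> d Y s)
    = ereal (\<kappa> * (F_C \<epsilon> d Y \<theta> - F_Delta \<epsilon> d Y s))"
  using assms by (simp add: regularized_cost_eq Omega_Delta_argmax_prob[OF cost_adjusted_score_in_RY])

lemma argmins_regularized_cost:
  assumes "\<kappa> > 0"
  shows "argmins (\<lambda>q. ereal (ipY Y \<gamma> q) + ereal \<kappa> * FY_loss (RY Y) (ipY Y) (Omega_Delta \<epsilon> d Y) (matYT d Y \<theta>) q)
      (simplexY Y) = {argmax_prob \<epsilon> d Y (cost_adjusted_score \<kappa> d Y \<gamma> \<theta>)}"
proof (rule argmins_unique_min)
  let ?s = "cost_adjusted_score \<kappa> d Y \<gamma> \<theta>"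
  show "argmax_prob \<epsilon> d Y ?s \<in> simplexY Y" by (rule argmax_prob_simplex)
  fix q assume q: "q \<in> simplexY Y" "q \<noteq> argmax_prob \<epsilon> d Y ?s"
  have "0 < Omega_Delta \<epsilon> d Y q - ereal (ipY Y q ?s - F_Delta \<epsilon> d Y ?s)"
    by (rule ereal_diff_gr0[OF Omega_Delta_gt[OF cost_adjusted_score_in_RY q]])
  then have "0 < ereal \<kappa> * (Omega_Delta \<epsilon> d Y q - ereal (ipY Y q ?s - F_Delta \<epsilon> d Y ?s))"
    using ereal_mult_strict_left_mono[of 0 _ "ereal \<kappa>"] assms by simp
  then show "ereal (ipY Y \<gamma> (argmax_prob \<epsilon> d Y ?s))
        + ereal \<kappa> * FY_loss (RY Y) (ipY Y) (Omega_Delta \<epsilon> d Y) (matYT d Y \<theta>) (argmax_prob \<epsilon> d Y ?s)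
      < ereal (ipY Y \<gamma> q) + ereal \<kappa> * FY_loss (RY Y) (ipY Y) (Omega_Delta \<epsilon> d Y) (matYT d Y \<theta>) q"
    unfolding regularized_cost_at_argmax_prob[OF assms]
    unfolding regularized_cost_eq[OF assms]
    using ereal_less_add[of "ereal (\<kappa> * (F_C \<epsilon> d Y \<theta> - F_Delta \<epsilon> d Y ?s))" 0] by simp
qed

lemma regularized_cost_minimizer:
  fixes \<gamma> :: "vec \<Rightarrow> real" and \<theta> :: vec
  assumes "\<kappa> > 0"
  defines "q \<equiv> argmax_prob \<epsilon> d Y (cost_adjusted_score \<kappa> d Y \<gamma> \<theta>)"
  shows "q \<in> simplexY Y"
    and "matY Y q = (\<lambda>j. \<integral>Z. arg_min_on (\<lambda>y. \<gamma> y - \<kappa> * ipd d (\<lambda>k. \<theta> k + \<epsilon> * Z k) y) Y j \<partial>G)"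
    and "\<bar>Omega_Delta \<epsilon> d Y q\<bar> \<noteq> \<infinity>"
    and "\<bar>Omega_C \<epsilon> d Y (matY Y q)\<bar> \<noteq> \<infinity>"
proof -
  show "q \<in> simplexY Y" unfolding q_def by (rule argmax_prob_simplex)
  show "matY Y q = (\<lambda>j. \<integral>Z. arg_min_on (\<lambda>y. \<gamma> y - \<kappa> * ipd d (\<lambda>k. \<theta> k + \<epsilon> * Z k) y) Y j \<partial>G)"
    unfolding q_def matY_argmax_prob arg_min_on_cost_eq_perturbed_argmax[OF assms(1)] ..
  show "\<bar>Omega_Delta \<epsilon> d Y q\<bar> \<noteq> \<infinity>"
    unfolding q_def Omega_Delta_argmax_prob[OF cost_adjusted_score_in_RY] by simp
  then show "\<bar>Omega_C \<epsilon> d Y (matY Y q)\<bar> \<noteq> \<infinity>"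
    using Omega_C_matY_le[of q] Omega_C_ge[of "matY Y q"] by auto
qed

end

subsection \<open>The alternating updates\<close>

lemma argmins_S_N_inference_step:
  assumes pm: "\<And>i. i \<in> {1..N} \<Longrightarrow> perturbed_max (d (x i)) (Ycal (x i)) \<epsilon>"
    and \<kappa>: "\<kappa> > 0" and N: "N > 0"
  shows "argmins (S_N \<epsilon> \<kappa> c d Ycal N x \<xi> (\<lambda>i. matYT (d (x i)) (Ycal (x i)) (\<theta> i)))
      (PiE {1..N} (\<lambda>i. simplexY (Ycal (x i))))
    = {\<lambda>i\<in>{1..N}. argmax_prob \<epsilon> (d (x i)) (Ycal (x i))
         (cost_adjusted_score \<kappa> (d (x i)) (Ycal (x i)) (\<lambda>y. c (x i) y (\<xi> i)) (\<theta> i))}"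
  unfolding S_N_def S_loss_def
  by (rule argmins_sum_PiE)
     (use N \<kappa> in \<open>simp_all add: perturbed_max.argmins_regularized_cost[OF pm]
        perturbed_max.regularized_cost_at_argmax_prob[OF pm]\<close>)

lemma argmins_S_N_learning_step:
  assumes pm: "\<And>i. i \<in> {1..N} \<Longrightarrow> perturbed_max (d (x i)) (Ycal (x i)) \<epsilon>"
    and \<kappa>: "\<kappa> > 0" and N: "N > 0"
    and fin: "\<And>i. i \<in> {1..N} \<Longrightarrow> \<bar>Omega_Delta \<epsilon> (d (x i)) (Ycal (x i)) (q i)\<bar> \<noteq> \<infinity>"
  shows "argmins (\<lambda>w. S_N \<epsilon> \<kappa> c d Ycal N x \<xi> (\<lambda>i. matYT (d (x i)) (Ycal (x i)) (\<phi> w (x i))) q) W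
    = argmins (\<lambda>w. (1 / real N) * (\<Sum>i\<in>{1..N}.
        F_C \<epsilon> (d (x i)) (Ycal (x i)) (\<phi> w (x i)) - ipd (d (x i)) (\<phi> w (x i)) (matY (Ycal (x i)) (q i)))) W"
  unfolding S_N_def
proof (rule argmins_ereal_sum_affine[OF _ \<kappa>])
  fix i w assume i: "i \<in> {1..N}"
  obtain r where r: "Omega_Delta \<epsilon> (d (x i)) (Ycal (x i)) (q i) = ereal r"
    using fin[OF i] by force
  show "S_loss \<epsilon> \<kappa> c d Ycal (matYT (d (x i)) (Ycal (x i)) (\<phi> w (x i))) (q i) (x i) (\<xi> i)
    = ereal (ipY (Ycal (x i)) (\<lambda>y. c (x i) y (\<xi> i)) (q i)
        + \<kappa> * real_of_ereal (Omega_Delta \<epsilon> (d (x i)) (Ycal (x i)) (q i))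
        + \<kappa> * (F_C \<epsilon> (d (x i)) (Ycal (x i)) (\<phi> w (x i)) - ipd (d (x i)) (\<phi> w (x i)) (matY (Ycal (x i)) (q i))))"
    by (simp add: S_loss_def perturbed_max.FY_loss_Omega_Delta_matYT[OF pm[OF i]] r algebra_simps)
qed (use N in simp)

lemma argmins_FY_Omega_C_learning_step:
  assumes pm: "\<And>i. i \<in> {1..N} \<Longrightarrow> perturbed_max (d (x i)) (Ycal (x i)) \<epsilon>" and N: "N > 0"
    and \<phi>: "\<And>w i. w \<in> W \<Longrightarrow> i \<in> {1..N} \<Longrightarrow> \<phi> w (x i) \<in> Rd (d (x i))"
    and fin: "\<And>i. i \<in> {1..N} \<Longrightarrow> \<bar>Omega_C \<epsilon> (d (x i)) (Ycal (x i)) (\<mu> i)\<bar> \<noteq> \<infinity>"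
  shows "argmins (\<lambda>w. ereal (1 / real N) * (\<Sum>i\<in>{1..N}.
        FY_loss (Rd (d (x i))) (ipd (d (x i))) (Omega_C \<epsilon> (d (x i)) (Ycal (x i))) (\<phi> w (x i)) (\<mu> i))) W
    = argmins (\<lambda>w. (1 / real N) * (\<Sum>i\<in>{1..N}.
        F_C \<epsilon> (d (x i)) (Ycal (x i)) (\<phi> w (x i)) - ipd (d (x i)) (\<phi> w (x i)) (\<mu> i))) W"
proof (rule argmins_ereal_sum_affine[where k = 1])
  fix i w assume i: "i \<in> {1..N}" and w: "w \<in> W"
  obtain r where r: "Omega_C \<epsilon> (d (x i)) (Ycal (x i)) (\<mu> i) = ereal r"
    using fin[OF i] by force
  show "FY_loss (Rd (d (x i))) (ipd (d (x i))) (Omega_C \<epsilon> (d (x i)) (Ycal (x i))) (\<phi> w (x i)) (\<mu> i)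
    = ereal (real_of_ereal (Omega_C \<epsilon> (d (x i)) (Ycal (x i)) (\<mu> i))
        + 1 * (F_C \<epsilon> (d (x i)) (Ycal (x i)) (\<phi> w (x i)) - ipd (d (x i)) (\<phi> w (x i)) (\<mu> i)))"
    by (simp add: perturbed_max.FY_loss_Omega_C[OF pm[OF i] \<phi>[OF w i]] r)
qed (use N in simp_all)

theorem proposition2:
  fixes \<epsilon> \<kappa> :: real and N :: nat
    and x :: "nat \<Rightarrow> 'x" and \<xi> :: "nat \<Rightarrow> 'n"
    and c :: "'x \<Rightarrow> vec \<Rightarrow> 'n \<Rightarrow> real"
    and d :: "'x \<Rightarrow> nat" and Ycal :: "'x \<Rightarrow> vec set"
    and \<phi> :: "'w \<Rightarrow> 'x \<Rightarrow> vec" and W :: "'w set" and wbar :: 'w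
  assumes eps: "\<epsilon> > 0" and kappa: "\<kappa> > 0" and N: "N > 0"
    and Y_fin: "\<And>i. i \<in> {1..N} \<Longrightarrow> finite (Ycal (x i))"
    and Y_ne: "\<And>i. i \<in> {1..N} \<Longrightarrow> Ycal (x i) \<noteq> {}"
    and Y_dim: "\<And>i. i \<in> {1..N} \<Longrightarrow> Ycal (x i) \<subseteq> Rd (d (x i))"
    and Y_ext: "\<And>i y. i \<in> {1..N} \<Longrightarrow> y \<in> Ycal (x i) \<Longrightarrow> y \<notin> convY (Ycal (x i) - {y})"
    and phi_dim: "\<And>w i. w \<in> W \<Longrightarrow> i \<in> {1..N} \<Longrightarrow> \<phi> w (x i) \<in> Rd (d (x i))"
    and wbar: "wbar \<in> W"
  shows
    "(\<exists>!q. q \<in> argmins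
              (S_N \<epsilon> \<kappa> c d Ycal N x \<xi> (\<lambda>i. matYT (d (x i)) (Ycal (x i)) (\<phi> wbar (x i))))
              (PiE {1..N} (\<lambda>i. simplexY (Ycal (x i)))))
     \<and> (\<forall>q \<in> argmins
              (S_N \<epsilon> \<kappa> c d Ycal N x \<xi> (\<lambda>i. matYT (d (x i)) (Ycal (x i)) (\<phi> wbar (x i))))
              (PiE {1..N} (\<lambda>i. simplexY (Ycal (x i)))).
          (\<forall>i \<in> {1..N}.
             matY (Ycal (x i)) (q i) =
               (\<lambda>j. \<integral>Z. (arg_min_on
                      (\<lambda>y. c (x i) y (\<xi> i) - \<kappa> * ipd (d (x i)) (\<lambda>k. \<phi> wbar (x i) k + \<epsilon> * Z k) y)
                      (Ycal (x i))) j \<partial>gauss (d (x i)))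
             \<and> matY (Ycal (x i)) (q i) \<in> convY (Ycal (x i)))
          \<and> argmins (\<lambda>w. S_N \<epsilon> \<kappa> c d Ycal N x \<xi> (\<lambda>i. matYT (d (x i)) (Ycal (x i)) (\<phi> w (x i))) q) W
            = argmins (\<lambda>w. (1 / real N) * (\<Sum>i\<in>{1..N}.
                  F_C \<epsilon> (d (x i)) (Ycal (x i)) (\<phi> w (x i))
                  - ipd (d (x i)) (\<phi> w (x i)) (matY (Ycal (x i)) (q i)))) W
          \<and> argmins (\<lambda>w. ereal (1 / real N) * (\<Sum>i\<in>{1..N}.
                  FY_loss (Rd (d (x i))) (ipd (d (x i))) (Omega_C \<epsilon> (d (x i)) (Ycal (x i)))
                    (\<phi> w (x i)) (matY (Ycal (x i)) (q i)))) W
            = argmins (\<lambda>w. (1 / real N) * (\<Sum>i\<in>{1..N}.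
                  F_C \<epsilon> (d (x i)) (Ycal (x i)) (\<phi> w (x i))
                  - ipd (d (x i)) (\<phi> w (x i)) (matY (Ycal (x i)) (q i)))) W)"
proof -
  have pm: "\<And>i. i \<in> {1..N} \<Longrightarrow> perturbed_max (d (x i)) (Ycal (x i)) \<epsilon>"
    using Y_fin Y_ne Y_dim eps by unfold_locales
  define Q where "Q = (\<lambda>i\<in>{1..N}. argmax_prob \<epsilon> (d (x i)) (Ycal (x i))
    (cost_adjusted_score \<kappa> (d (x i)) (Ycal (x i)) (\<lambda>y. c (x i) y (\<xi> i)) (\<phi> wbar (x i))))"
  have Q: "Q i \<in> simplexY (Ycal (x i))"
    "matY (Ycal (x i)) (Q i) = (\<lambda>j. \<integral>Z. (arg_min_on
       (\<lambda>y. c (x i) y (\<xi> i) - \<kappa> * ipd (d (x i)) (\<lambda>k. \<phi> wbar (x i) k + \<epsilon> * Z k) y)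
       (Ycal (x i))) j \<partial>gauss (d (x i)))"
    "\<bar>Omega_Delta \<epsilon> (d (x i)) (Ycal (x i)) (Q i)\<bar> \<noteq> \<infinity>"
    "\<bar>Omega_C \<epsilon> (d (x i)) (Ycal (x i)) (matY (Ycal (x i)) (Q i))\<bar> \<noteq> \<infinity>"
    if "i \<in> {1..N}" for i
    using perturbed_max.regularized_cost_minimizer[OF pm[OF that] kappa] that by (simp_all add: Q_def)
  have "argmins (S_N \<epsilon> \<kappa> c d Ycal N x \<xi> (\<lambda>i. matYT (d (x i)) (Ycal (x i)) (\<phi> wbar (x i))))
      (PiE {1..N} (\<lambda>i. simplexY (Ycal (x i)))) = {Q}" (is "?argmins = _")
    unfolding Q_def by (rule argmins_S_N_inference_step[where d = d and Ycal = Ycal and x = x, OF pm kappa N])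
  moreover have "matY (Ycal (x i)) (Q i) \<in> convY (Ycal (x i))" if "i \<in> {1..N}" for i
    using Q(1)[OF that] by (simp add: convY_def)
  ultimately show ?thesis
    unfolding \<open>?argmins = {Q}\<close> singleton_iff Ball_def
    by (simp only: simp_thms ex1_eq, intro conjI allI impI Q(2)
        argmins_S_N_learning_step[where d = d and Ycal = Ycal and x = x, OF pm kappa N Q(3)]
        argmins_FY_Omega_C_learning_step[where d = d and Ycal = Ycal and x = x, OF pm N phi_dim Q(4)])
       simp_all
qed

end
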